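(* Let $\mathcal{M}_1=(E_1,\rho_1)$ and $\mathcal{M}_2=(E_2,\rho_2)$ be $q$-matroids and let $\mathcal{M}_1\oplus\mathcal{M}_2$ be their direct sum on $E=E_1\oplus E_2$. Then \[ \mathcal{Z}(\mathcal{M}_1\oplus\mathcal{M}_2)=\{Z_1\oplus Z_2\mid Z_1\in\mathcal{Z}(\mathcal{M}_1),\ Z_2\in\mathcal{Z}(\mathcal{M}_2)\}. \]
   Context: Let $\mathbb{F}=\mathbb{F}_q$ be a finite field. For a finite-dimensional $\mathbb{F}$-vector space $E$, $\mathcal{L}(E)$ is the lattice of its subspaces. A $q$-matroid is a pair $\mathcal{M}=(E,\rho)$ with $\rho:\mathcal{L}(E)\to\mathbb{Z}_{\ge0}$ such that $0\le\rho(V)\le\dim V$, $V\le W\Rightarrow\rho(V)\le\rho(W)$, and $\rho(V+W)+\rho(V\cap W)\le\rho(V)+\rho(W)$ for all $V,W$. A subspace $F$ is a flat if $\rho(F+\langle x\rangle)>\rho(F)$ for all $x\in E\setminus F$. The cyclic core of $V$ is $\mathrm{cyc}(V)=\{x\in V\mid \rho(W)=\rho(V)\text{ for all }W\le V\text{ with }W+\langle x\rangle=V\}$ (a subspace); $V$ is cyclic if $\mathrm{cyc}(V)=V$. $\mathcal{Z}(\mathcal{M})$ denotes the set of cyclic flats (subspaces that are both flats and cyclic). Direct sum: given $q$-matroids $\mathcal{M}_i=(E_i,\rho_i)$, $i=1,2$, let $E=E_1\oplus E_2$ (each $E_i$ identified with its image in $E$) with projections $\pi_i:E\to E_i$; the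 direct sum $\mathcal{M}_1\oplus\mathcal{M}_2=(E,\rho)$ is the $q$-matroid with $\rho(V)=\dim V+\min_{X\le V}\big(\rho_1(\pi_1(X))+\rho_2(\pi_2(X))-\dim X\big)$. *)

theory Defs
  imports "HOL-Analysis.Analysis"
begin

text \<open>Finite-dimensional vector spaces over a finite field 'a are modelled as subspaces E
  of the coordinate space 'a^'n (every finite-dimensional space, including the zero space,
  embeds in such a space).\<close>

definition qsub :: "('a::field ^ 'n) set \<Rightarrow> ('a ^ 'n) set \<Rightarrow> bool" where
  "qsub E V \<longleftrightarrow> vec.subspace V \<and> V \<subseteq> E"

definition ssum :: "('a::field ^ 'n) set \<Rightarrow> ('a ^ 'n) set \<Rightarrow> ('a ^ 'n) set" where
  "ssum V W = {v + w | v w. v \<in> V \<and> w \<in> W}"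

definition qmatroid :: "('a::field ^ 'n) set \<Rightarrow> (('a ^ 'n) set \<Rightarrow> nat) \<Rightarrow> bool" where
  "qmatroid E \<rho> \<longleftrightarrow> vec.subspace E
     \<and> (\<forall>V. qsub E V \<longrightarrow> \<rho> V \<le> vec.dim V)
     \<and> (\<forall>V W. qsub E V \<and> qsub E W \<and> V \<subseteq> W \<longrightarrow> \<rho> V \<le> \<rho> W)
     \<and> (\<forall>V W. qsub E V \<and> qsub E W \<longrightarrow>
            \<rho> (ssum V W) + \<rho> (V \<inter> W) \<le> \<rho> V + \<rho> W)"

definition qflat :: "('a::field ^ 'n) set \<Rightarrow> (('a ^ 'n) set \<Rightarrow> nat) \<Rightarrow> ('a ^ 'n) set \<Rightarrow> bool" where
  "qflat E \<rho> F \<longleftrightarrow> qsub E F \<and> (\<forall>x \<in> E - F. \<rho> (vec.span (insert x F)) > \<rho> F)"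

definition cyc :: "(('a::field ^ 'n) set \<Rightarrow> nat) \<Rightarrow> ('a ^ 'n) set \<Rightarrow> ('a ^ 'n) set" where
  "cyc \<rho> V = {x \<in> V. \<forall>W. vec.subspace W \<and> W \<subseteq> V \<and> vec.span (insert x W) = V \<longrightarrow> \<rho> W = \<rho> V}"

definition qcyclic :: "(('a::field ^ 'n) set \<Rightarrow> nat) \<Rightarrow> ('a ^ 'n) set \<Rightarrow> bool" where
  "qcyclic \<rho> V \<longleftrightarrow> cyc \<rho> V = V"

definition cyclic_flats :: "('a::field ^ 'n) set \<Rightarrow> (('a ^ 'n) set \<Rightarrow> nat) \<Rightarrow> ('a ^ 'n) set set" where
  "cyclic_flats E \<rho> = {Z. qflat E \<rho> Z \<and> qcyclic \<rho> Z}"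

definition proj1 :: "'a ^ ('n1::finite + 'n2::finite) \<Rightarrow> 'a ^ 'n1" where
  "proj1 x = (\<chi> i. x $ Inl i)"
definition proj2 :: "'a ^ ('n1::finite + 'n2::finite) \<Rightarrow> 'a ^ 'n2" where
  "proj2 x = (\<chi> i. x $ Inr i)"
definition emb1 :: "'a::zero ^ 'n1 \<Rightarrow> 'a ^ ('n1::finite + 'n2::finite)" where
  "emb1 y = (\<chi> j. case j of Inl i \<Rightarrow> y $ i | Inr _ \<Rightarrow> 0)"
definition emb2 :: "'a::zero ^ 'n2 \<Rightarrow> 'a ^ ('n1::finite + 'n2::finite)" where
  "emb2 y = (\<chi> j. case j of Inl _ \<Rightarrow> 0 | Inr i \<Rightarrow> y $ i)"

definition dsum_space :: "('a::field ^ 'n1) set \<Rightarrow> ('a ^ 'n2) set \<Rightarrow> ('a ^ ('n1::finite + 'n2::finite)) set" where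
  "dsum_space V1 V2 = {emb1 a + emb2 b | a b. a \<in> V1 \<and> b \<in> V2}"

definition dsum_rank :: "(('a::{field,finite} ^ 'n1) set \<Rightarrow> nat) \<Rightarrow> (('a ^ 'n2) set \<Rightarrow> nat)
    \<Rightarrow> ('a ^ ('n1 + 'n2)) set \<Rightarrow> nat" where
  "dsum_rank \<rho>1 \<rho>2 V = nat (int (vec.dim V) +
     Min ((\<lambda>X. int (\<rho>1 (proj1 ` X)) + int (\<rho>2 (proj2 ` X)) - int (vec.dim X))
          ` {X. vec.subspace X \<and> X \<subseteq> V}))"

end

theory Submission
  imports Defs
begin

(* Write nullity for dimension minus rank. The direct-sum rank is
     rho V = dim V - max {dim X - rho1 (pi1 X) - rho2 (pi2 X) | X <= V},
   and dim X <= dim (pi1 X) + dim (pi2 X). In a q-matroid the nullity is monotone, does not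
   grow from a flat Z to a subspace of Z + <y>, and drops strictly below a cyclic space.
   Bounding X through its projections therefore gives rho (Z1 (+) Z2) = rho1 Z1 + rho2 Z2 and
   transfers flatness and cyclicity between Z1 (+) Z2 and its summands in both directions.
   Conversely, on a cyclic space Z the maximum is attained at X = Z, so
   rho Z = rho1 (pi1 Z) + rho2 (pi2 Z), and flatness of Z then forces Z = pi1 Z (+) pi2 Z. *)

lemmas span_of_subspace = vec.span_eq_iff[THEN iffD2]

lemma exists_hyperplane_avoiding:
  fixes A V :: "('a::field ^ 'n) set"
  assumes A: "vec.subspace A" "A \<subseteq> V" and V: "vec.subspace V" and x: "x \<in> V" "x \<notin> A"
  obtains H where "vec.subspace H" "A \<subseteq> H" "H \<subseteq> V" "x \<notin> H" "vec.span (insert x H) = V"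
proof -
  obtain B0 where B0: "B0 \<subseteq> A" "vec.independent B0" "A \<subseteq> vec.span B0"
    using vec.basis_exists[of A] by metis
  have "vec.span B0 \<subseteq> A"
    using B0(1) A(1) by (rule vec.span_minimal)
  then have "x \<notin> vec.span B0"
    using x(2) by blast
  then have "vec.independent (insert x B0)"
    using B0(2) by (rule vec.independent_insertI)
  moreover have "insert x B0 \<subseteq> V" using x A B0 by blast
  ultimately obtain B where B: "insert x B0 \<subseteq> B" "B \<subseteq> V" "vec.independent B" "V \<subseteq> vec.span B"
    using vec.maximal_independent_subset_extend[of "insert x B0" V] by metis
  let ?H = "vec.span (B - {x})"
  show thesis
  proof
    show "vec.subspace ?H" by (rule vec.subspace_span)
    show "A \<subseteq> ?H"
      using B0 B x(2) vec.span_mono[of B0 "B - {x}"] by blast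
    show "?H \<subseteq> V"
      using B(2) V by (meson Diff_subset order_trans vec.span_minimal)
    have "x \<in> B" using B(1) by blast
    then show "x \<notin> ?H"
      using B(3) unfolding vec.dependent_def by blast
    have BH: "B \<subseteq> insert x ?H"
      using vec.span_superset[of "B - {x}"] by blast
    have "V \<subseteq> vec.span (insert x ?H)"
      using B(4) vec.span_mono[OF BH] by blast
    moreover have "vec.span (insert x ?H) \<subseteq> V"
      using x(1) \<open>?H \<subseteq> V\<close> V by (simp add: vec.span_minimal)
    ultimately show "vec.span (insert x ?H) = V" by blast
  qed
qed

section \<open>Coordinates of the direct sum\<close>

lemma proj1_emb1 [simp]: "proj1 (emb1 a :: 'a::zero ^ ('n1::finite + 'n2::finite)) = a"
  by (simp add: proj1_def emb1_def vec_eq_iff)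

lemma proj2_emb2 [simp]: "proj2 (emb2 a :: 'a::zero ^ ('n1::finite + 'n2::finite)) = a"
  by (simp add: proj2_def emb2_def vec_eq_iff)

lemma proj1_emb2 [simp]: "proj1 (emb2 a :: 'a::zero ^ ('n1::finite + 'n2::finite)) = 0"
  by (simp add: proj1_def emb2_def vec_eq_iff)

lemma proj2_emb1 [simp]: "proj2 (emb1 a :: 'a::zero ^ ('n1::finite + 'n2::finite)) = 0"
  by (simp add: proj2_def emb1_def vec_eq_iff)

lemma emb1_proj1_add_emb2_proj2:
  "emb1 (proj1 x) + emb2 (proj2 x) = (x :: 'a::monoid_add ^ ('n1::finite + 'n2::finite))"
  by (simp add: emb1_def emb2_def proj1_def proj2_def vec_eq_iff split: sum.splits)

lemma linear_proj1:
  "Vector_Spaces.linear (*s) (*s) (proj1 :: 'a::field ^ ('n1::finite + 'n2::finite) \<Rightarrow> 'a ^ 'n1)"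
  by (simp add: Vector_Spaces.linear_iff vec.vector_space_axioms proj1_def vec_eq_iff)

lemma linear_proj2:
  "Vector_Spaces.linear (*s) (*s) (proj2 :: 'a::field ^ ('n1::finite + 'n2::finite) \<Rightarrow> 'a ^ 'n2)"
  by (simp add: Vector_Spaces.linear_iff vec.vector_space_axioms proj2_def vec_eq_iff)

lemma linear_emb1:
  "Vector_Spaces.linear (*s) (*s) (emb1 :: 'a::field ^ 'n1 \<Rightarrow> 'a ^ ('n1::finite + 'n2::finite))"
  by (simp add: Vector_Spaces.linear_iff vec.vector_space_axioms emb1_def vec_eq_iff split: sum.splits)

lemma linear_emb2:
  "Vector_Spaces.linear (*s) (*s) (emb2 :: 'a::field ^ 'n2 \<Rightarrow> 'a ^ ('n1::finite + 'n2::finite))"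
  by (simp add: Vector_Spaces.linear_iff vec.vector_space_axioms emb2_def vec_eq_iff split: sum.splits)

lemmas proj1_diff [simp] = vec.linear_diff[OF linear_proj1]
lemmas proj2_diff [simp] = vec.linear_diff[OF linear_proj2]
lemmas proj1_scale [simp] = vec.linear_scale[OF linear_proj1]
lemmas proj2_scale [simp] = vec.linear_scale[OF linear_proj2]

lemma mem_dsum_space [simp]:
  "x \<in> dsum_space A B \<longleftrightarrow> proj1 x \<in> A \<and> proj2 x \<in> B"
  unfolding dsum_space_def
proof safe
  assume "proj1 x \<in> A" "proj2 x \<in> B"
  then show "\<exists>a b. x = emb1 a + emb2 b \<and> a \<in> A \<and> b \<in> B"
    using emb1_proj1_add_emb2_proj2[of x] by metis
qed (simp_all add: proj1_def proj2_def emb1_def emb2_def)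

lemma subspace_dsum_space:
  assumes "vec.subspace A" "vec.subspace B"
  shows "vec.subspace (dsum_space A B :: ('a::field ^ ('n1::finite + 'n2::finite)) set)"
proof -
  have "dsum_space A B = proj1 -` A \<inter> (proj2 -` B :: ('a ^ ('n1 + 'n2)) set)" by auto
  then show ?thesis
    using vec.linear_subspace_vimage[OF linear_proj1 assms(1)]
      vec.linear_subspace_vimage[OF linear_proj2 assms(2)] vec.subspace_inter by metis
qed

lemma proj1_dsum_space: "0 \<in> B \<Longrightarrow> proj1 ` dsum_space A B = A"
  by (auto simp: image_iff intro!: bexI[of _ "emb1 _"])

lemma proj2_dsum_space: "0 \<in> A \<Longrightarrow> proj2 ` dsum_space A B = B"
  by (auto simp: image_iff intro!: bexI[of _ "emb2 _"])

lemma inj_emb1: "inj (emb1 :: 'a::zero ^ 'n1 \<Rightarrow> 'a ^ ('n1::finite + 'n2::finite))"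
  by (metis injI proj1_emb1)

lemma inj_emb2: "inj (emb2 :: 'a::zero ^ 'n2 \<Rightarrow> 'a ^ ('n1::finite + 'n2::finite))"
  by (metis injI proj2_emb2)

lemma dim_dsum_space:
  assumes "vec.subspace A" "vec.subspace B"
  shows "vec.dim (dsum_space A B :: ('a::field ^ ('n1::finite + 'n2::finite)) set)
    = vec.dim A + vec.dim B"
proof -
  let ?A = "emb1 ` A :: ('a ^ ('n1 + 'n2)) set" and ?B = "emb2 ` B :: ('a ^ ('n1 + 'n2)) set"
  have "?A \<inter> ?B \<subseteq> {0}"
  proof
    fix v assume "v \<in> ?A \<inter> ?B"
    then obtain a b where "v = emb1 a" "v = emb2 b" by blast
    then have "a = 0" by (metis proj1_emb1 proj1_emb2)
    then show "v \<in> {0}"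
      using \<open>v = emb1 a\<close> vec.linear_0[OF linear_emb1] by simp
  qed
  then have "vec.dim (?A \<inter> ?B) = 0"
    by simp
  moreover have "dsum_space A B = {x + y |x y. x \<in> ?A \<and> y \<in> ?B}"
    unfolding dsum_space_def by blast
  moreover have "vec.dim ?A = vec.dim A" "vec.dim ?B = vec.dim B"
    using vec.dim_image_eq[OF linear_emb1] vec.dim_image_eq[OF linear_emb2]
      inj_emb1 inj_emb2 by (metis inj_on_subset subset_UNIV)+
  ultimately show ?thesis
    using vec.dim_sums_Int[OF vec.linear_subspace_image[OF linear_emb1 assms(1)]
        vec.linear_subspace_image[OF linear_emb2 assms(2)]] by (simp del: vec.dim_eq_0)
qed

lemma dim_le_dim_proj1_add_dim_proj2:
  assumes "vec.subspace (X :: ('a::field ^ ('n1::finite + 'n2::finite)) set)"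
  shows "vec.dim X \<le> vec.dim (proj1 ` X) + vec.dim (proj2 ` X)"
proof -
  have "X \<subseteq> dsum_space (proj1 ` X) (proj2 ` X)" by auto
  then show ?thesis
    using vec.dim_subset dim_dsum_space vec.linear_subspace_image linear_proj1 linear_proj2 assms
    by metis
qed

lemma span_insert_emb1_dsum_space:
  assumes "vec.subspace A" "vec.subspace B"
  shows "vec.span (insert (emb1 y) (dsum_space A B :: ('a::field ^ ('n1::finite + 'n2::finite)) set))
    = dsum_space (vec.span (insert y A)) B"
  using assms subspace_dsum_space[OF assms]
  by (simp add: vec.span_insert span_of_subspace set_eq_iff)

lemma span_insert_emb2_dsum_space:
  assumes "vec.subspace A" "vec.subspace B"
  shows "vec.span (insert (emb2 y) (dsum_space A B :: ('a::field ^ ('n1::finite + 'n2::finite)) set))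
    = dsum_space A (vec.span (insert y B))"
  using assms subspace_dsum_space[OF assms]
  by (simp add: vec.span_insert span_of_subspace set_eq_iff)

lemma qsub_dsum_space: "qsub E1 A \<Longrightarrow> qsub E2 B \<Longrightarrow> qsub (dsum_space E1 E2) (dsum_space A B)"
  by (auto simp: qsub_def subspace_dsum_space)

section \<open>Flats, cyclic spaces and nullity in a q-matroid\<close>

lemma qflatI:
  "qsub E F \<Longrightarrow> (\<And>x. x \<in> E \<Longrightarrow> x \<notin> F \<Longrightarrow> \<rho> F < \<rho> (vec.span (insert x F)))
    \<Longrightarrow> qflat E \<rho> F"
  by (simp add: qflat_def)

lemma qflatD: "qflat E \<rho> F \<Longrightarrow> x \<in> E \<Longrightarrow> x \<notin> F \<Longrightarrow> \<rho> F < \<rho> (vec.span (insert x F))"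
  by (simp add: qflat_def)

lemma qcyclicI:
  assumes "\<And>x W. x \<in> V \<Longrightarrow> vec.subspace W \<Longrightarrow> W \<subseteq> V \<Longrightarrow> vec.span (insert x W) = V
    \<Longrightarrow> \<rho> W = \<rho> V"
  shows "qcyclic \<rho> V"
  using assms unfolding qcyclic_def cyc_def by blast

lemma qcyclicD:
  assumes "qcyclic \<rho> V" "x \<in> V" "vec.subspace W" "W \<subseteq> V" "vec.span (insert x W) = V"
  shows "\<rho> W = \<rho> V"
  using assms unfolding qcyclic_def cyc_def by blast

lemma qsub_span_insert:
  "vec.subspace E \<Longrightarrow> x \<in> E \<Longrightarrow> B \<subseteq> E \<Longrightarrow> qsub E (vec.span (insert x B))"
  by (simp add: qsub_def vec.span_minimal)

lemma qcyclic_hyperplane: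
  fixes V :: "('a::field ^ 'n) set"
  assumes "qcyclic \<rho> V" "vec.subspace V" "vec.subspace A" "A \<subseteq> V" "A \<noteq> V"
  obtains H where "vec.subspace H" "A \<subseteq> H" "H \<subseteq> V" "vec.dim V = vec.dim H + 1" "\<rho> H = \<rho> V"
proof -
  obtain x where x: "x \<in> V" "x \<notin> A" using assms(4,5) by blast
  then obtain H where H: "vec.subspace H" "A \<subseteq> H" "H \<subseteq> V" "x \<notin> H" "vec.span (insert x H) = V"
    using exists_hyperplane_avoiding assms(2-4) by metis
  have "vec.dim V = vec.dim H + 1"
    using H(1,4) by (simp flip: H(5) add: vec.dim_insert span_of_subspace)
  then show thesis
    using that[OF H(1-3)] qcyclicD[OF assms(1) x(1) H(1,3,5)] by simp
qed

lemma qmatroid_rank_le_dim: "qmatroid E \<rho> \<Longrightarrow> qsub E V \<Longrightarrow> \<rho> V \<le> vec.dim V"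
  by (simp add: qmatroid_def)

lemma qmatroid_rank_mono:
  "qmatroid E \<rho> \<Longrightarrow> qsub E V \<Longrightarrow> qsub E W \<Longrightarrow> V \<subseteq> W \<Longrightarrow> \<rho> V \<le> \<rho> W"
  by (simp add: qmatroid_def)

lemma qmatroid_rank_span_insert_le:
  fixes E :: "('a::field ^ 'n) set"
  assumes qm: "qmatroid E \<rho>" and B: "qsub E B" and x: "x \<in> E"
  shows "\<rho> (vec.span (insert x B)) \<le> \<rho> B + 1"
proof -
  have E: "vec.subspace E" and B': "vec.subspace B" "B \<subseteq> E"
    using qm B by (auto simp: qmatroid_def qsub_def)
  let ?X = "vec.span {x}"
  have X: "qsub E ?X"
    using E x by (simp add: qsub_def vec.span_minimal)
  have "ssum B ?X = vec.span (insert x B)"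
    using vec.span_Un[of B "{x}"] B' by (simp add: ssum_def span_of_subspace)
  moreover have "\<rho> (ssum B ?X) + \<rho> (B \<inter> ?X) \<le> \<rho> B + \<rho> ?X"
    using qm B X by (simp add: qmatroid_def)
  moreover have "\<rho> ?X \<le> vec.dim ?X"
    using qm X by (rule qmatroid_rank_le_dim)
  moreover have "vec.dim ?X \<le> 1"
    by (simp add: vec.dim_insert)
  ultimately show ?thesis by simp
qed

lemma qmatroid_nullity_mono:
  fixes E :: "('a::field ^ 'n) set"
  assumes qm: "qmatroid E \<rho>" and B: "qsub E B" and A: "vec.subspace A" "A \<subseteq> B"
  shows "\<rho> B + vec.dim A \<le> \<rho> A + vec.dim B"
  using A
proof (induction "vec.dim B - vec.dim A" arbitrary: A rule: less_induct)
  case less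
  show ?case
  proof (cases "A = B")
    case False
    then obtain x where x: "x \<in> B" "x \<notin> A" using less.prems by blast
    let ?A' = "vec.span (insert x A)"
    have B': "vec.subspace B" "B \<subseteq> E" using B by (auto simp: qsub_def)
    have A'B: "?A' \<subseteq> B"
      using x less.prems B' by (simp add: vec.span_minimal)
    have dA': "vec.dim ?A' = vec.dim A + 1"
      using x less.prems by (simp add: vec.dim_insert span_of_subspace)
    have "vec.dim ?A' \<le> vec.dim B" using A'B by (rule vec.dim_subset)
    then have "\<rho> B + vec.dim ?A' \<le> \<rho> ?A' + vec.dim B"
      using dA' A'B by (intro less.hyps) auto
    moreover have "\<rho> ?A' \<le> \<rho> A + 1"
      using qmatroid_rank_span_insert_le[OF qm] less.prems B' x by (auto simp: qsub_def)
    ultimately show ?thesis using dA' by linarith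
  qed simp
qed

lemma qflat_nullity_le:
  fixes E :: "('a::field ^ 'n) set"
  assumes qm: "qmatroid E \<rho>" and Z: "qflat E \<rho> Z" and y: "y \<in> E"
    and A: "vec.subspace A" "A \<subseteq> vec.span (insert y Z)"
  shows "\<rho> Z + vec.dim A \<le> \<rho> A + vec.dim Z"
proof -
  have E: "vec.subspace E" using qm by (simp add: qmatroid_def)
  have qZ: "qsub E Z" and Z': "vec.subspace Z" "Z \<subseteq> E"
    using Z by (auto simp: qflat_def qsub_def)
  have "vec.span (insert y Z) \<subseteq> E"
    using E y Z'(2) by (simp add: vec.span_minimal)
  with A have AE: "A \<subseteq> E" by blast
  show ?thesis
  proof (cases "A \<subseteq> Z")
    case True
    then show ?thesis using qmatroid_nullity_mono[OF qm qZ A(1)] by simp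
  next
    case False
    then obtain a where a: "a \<in> A" "a \<notin> Z" by blast
    let ?S = "vec.span (A \<union> Z)"
    have qS: "qsub E ?S"
      using AE Z'(2) E by (simp add: qsub_def vec.span_minimal)
    have "A \<subseteq> ?S"
      using vec.span_superset[of "A \<union> Z"] by blast
    then have nS: "\<rho> ?S + vec.dim A \<le> \<rho> A + vec.dim ?S"
      using qmatroid_nullity_mono[OF qm qS A(1)] by blast
    have "A \<union> Z \<subseteq> vec.span (insert y Z)"
      using A(2) vec.span_superset[of "insert y Z"] by blast
    then have "?S \<subseteq> vec.span (insert y Z)"
      by (rule vec.span_minimal) simp
    then have "vec.dim ?S \<le> vec.dim (vec.span (insert y Z))"
      by (rule vec.dim_subset)
    also have "\<dots> \<le> vec.dim Z + 1"
      by (simp add: vec.dim_insert)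
    finally have dS: "vec.dim ?S \<le> vec.dim Z + 1" .
    have "\<rho> Z < \<rho> (vec.span (insert a Z))"
      using qflatD[OF Z] a AE by blast
    also have "\<dots> \<le> \<rho> ?S"
    proof (rule qmatroid_rank_mono[OF qm _ qS])
      show "qsub E (vec.span (insert a Z))"
        using E a(1) AE Z'(2) by (intro qsub_span_insert) auto
      show "vec.span (insert a Z) \<subseteq> ?S"
        using a(1) by (intro vec.span_mono) auto
    qed
    finally show ?thesis using nS dS by linarith
  qed
qed

lemma qcyclic_nullity_less:
  fixes E :: "('a::field ^ 'n) set"
  assumes qm: "qmatroid E \<rho>" and Z: "qsub E Z" "qcyclic \<rho> Z"
    and A: "vec.subspace A" "A \<subseteq> Z" "A \<noteq> Z"
  shows "\<rho> Z + vec.dim A < \<rho> A + vec.dim Z"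
proof -
  have Z': "vec.subspace Z" "Z \<subseteq> E" using Z(1) by (auto simp: qsub_def)
  obtain H where H: "vec.subspace H" "A \<subseteq> H" "H \<subseteq> Z" "vec.dim Z = vec.dim H + 1" "\<rho> H = \<rho> Z"
    using qcyclic_hyperplane[OF Z(2) Z'(1) A] by metis
  have "qsub E H" using H(1,3) Z'(2) by (auto simp: qsub_def)
  then have "\<rho> H + vec.dim A \<le> \<rho> A + vec.dim H"
    using qmatroid_nullity_mono[OF qm _ A(1) H(2)] by blast
  with H(4,5) show ?thesis by linarith
qed

section \<open>The rank function of the direct sum\<close>

lemma dsum_rank_le:
  assumes "vec.subspace X" "X \<subseteq> V"
  shows "dsum_rank \<rho>1 \<rho>2 V + vec.dim X \<le> vec.dim V + \<rho>1 (proj1 ` X) + \<rho>2 (proj2 ` X)"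
proof -
  let ?f = "\<lambda>X. int (\<rho>1 (proj1 ` X)) + int (\<rho>2 (proj2 ` X)) - int (vec.dim X)"
  have "Min (?f ` {X. vec.subspace X \<and> X \<subseteq> V}) \<le> ?f X"
    using assms by (intro Min_le) auto
  moreover have "vec.dim X \<le> vec.dim V"
    using assms(2) by (rule vec.dim_subset)
  ultimately show ?thesis
    unfolding dsum_rank_def by linarith
qed

lemma dsum_rank_attained:
  assumes "vec.subspace V"
  obtains X where "vec.subspace X" "X \<subseteq> V"
    "dsum_rank \<rho>1 \<rho>2 V + vec.dim X = vec.dim V + \<rho>1 (proj1 ` X) + \<rho>2 (proj2 ` X)"
proof -
  let ?f = "\<lambda>X. int (\<rho>1 (proj1 ` X)) + int (\<rho>2 (proj2 ` X)) - int (vec.dim X)"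
  have "Min (?f ` {X. vec.subspace X \<and> X \<subseteq> V}) \<in> ?f ` {X. vec.subspace X \<and> X \<subseteq> V}"
    using assms by (intro Min_in) auto
  then obtain X where X: "vec.subspace X" "X \<subseteq> V"
    "Min (?f ` {X. vec.subspace X \<and> X \<subseteq> V}) = ?f X"
    by auto
  have "vec.dim X \<le> vec.dim V"
    using X(2) by (rule vec.dim_subset)
  then have "dsum_rank \<rho>1 \<rho>2 V + vec.dim X = vec.dim V + \<rho>1 (proj1 ` X) + \<rho>2 (proj2 ` X)"
    unfolding dsum_rank_def X(3) by linarith
  with X(1,2) show thesis by (rule that)
qed

lemma dsum_rank_le_proj:
  "vec.subspace V \<Longrightarrow> dsum_rank \<rho>1 \<rho>2 V \<le> \<rho>1 (proj1 ` V) + \<rho>2 (proj2 ` V)"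
  using dsum_rank_le[of V V \<rho>1 \<rho>2] by simp

(* The offsets a and b keep the bound free of truncated subtraction on nat. *)
lemma dsum_rank_lower_bound:
  assumes "vec.subspace V"
    and "\<And>X. vec.subspace X \<Longrightarrow> X \<subseteq> V
      \<Longrightarrow> vec.dim X + a \<le> \<rho>1 (proj1 ` X) + \<rho>2 (proj2 ` X) + b"
  shows "vec.dim V + a \<le> dsum_rank \<rho>1 \<rho>2 V + b"
proof -
  obtain X where "vec.subspace X" "X \<subseteq> V"
    "dsum_rank \<rho>1 \<rho>2 V + vec.dim X = vec.dim V + \<rho>1 (proj1 ` X) + \<rho>2 (proj2 ` X)"
    by (rule dsum_rank_attained[OF assms(1)])
  with assms(2)[of X] show ?thesis by linarith
qed

lemma dsum_rank_dsum_space: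
  assumes qm1: "qmatroid E1 \<rho>1" and qm2: "qmatroid E2 \<rho>2" and A: "qsub E1 A" and B: "qsub E2 B"
  shows "dsum_rank \<rho>1 \<rho>2 (dsum_space A B) = \<rho>1 A + \<rho>2 B"
proof -
  have sA: "vec.subspace A" and sB: "vec.subspace B"
    using A B by (simp_all add: qsub_def)
  let ?D = "dsum_space A B"
  have sD: "vec.subspace ?D"
    using sA sB by (rule subspace_dsum_space)
  have "dsum_rank \<rho>1 \<rho>2 ?D \<le> \<rho>1 A + \<rho>2 B"
    using dsum_rank_le_proj[OF sD, of \<rho>1 \<rho>2] sA sB
    by (simp add: proj1_dsum_space proj2_dsum_space vec.subspace_0)
  moreover have "vec.dim ?D + (\<rho>1 A + \<rho>2 B) \<le> dsum_rank \<rho>1 \<rho>2 ?D + (vec.dim A + vec.dim B)"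
  proof (rule dsum_rank_lower_bound[OF sD])
    fix X assume X: "vec.subspace X" "X \<subseteq> ?D"
    have "\<rho>1 A + vec.dim (proj1 ` X) \<le> \<rho>1 (proj1 ` X) + vec.dim A"
      using X
      by (intro qmatroid_nullity_mono[OF qm1 A] vec.linear_subspace_image[OF linear_proj1]) auto
    moreover have "\<rho>2 B + vec.dim (proj2 ` X) \<le> \<rho>2 (proj2 ` X) + vec.dim B"
      using X
      by (intro qmatroid_nullity_mono[OF qm2 B] vec.linear_subspace_image[OF linear_proj2]) auto
    ultimately show "vec.dim X + (\<rho>1 A + \<rho>2 B)
        \<le> \<rho>1 (proj1 ` X) + \<rho>2 (proj2 ` X) + (vec.dim A + vec.dim B)"
      using dim_le_dim_proj1_add_dim_proj2[OF X(1)] by linarith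
  qed
  ultimately show ?thesis
    using dim_dsum_space[OF sA sB] by linarith
qed

lemma dsum_rank_qcyclic:
  assumes V: "vec.subspace V" and cyc: "qcyclic (dsum_rank \<rho>1 \<rho>2) V"
  shows "dsum_rank \<rho>1 \<rho>2 V = \<rho>1 (proj1 ` V) + \<rho>2 (proj2 ` V)"
proof -
  obtain X where X: "vec.subspace X" "X \<subseteq> V"
    "dsum_rank \<rho>1 \<rho>2 V + vec.dim X = vec.dim V + \<rho>1 (proj1 ` X) + \<rho>2 (proj2 ` X)"
    by (rule dsum_rank_attained[OF V])
  have "X = V"
  proof (rule ccontr)
    assume "X \<noteq> V"
    then obtain H where H: "vec.subspace H" "X \<subseteq> H" "H \<subseteq> V"
      "vec.dim V = vec.dim H + 1" "dsum_rank \<rho>1 \<rho>2 H = dsum_rank \<rho>1 \<rho>2 V"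
      using qcyclic_hyperplane[OF cyc V X(1,2)] by metis
    have "dsum_rank \<rho>1 \<rho>2 H + vec.dim X \<le> vec.dim H + \<rho>1 (proj1 ` X) + \<rho>2 (proj2 ` X)"
      using X(1) H(2) by (rule dsum_rank_le)
    with X(3) H(4,5) show False by linarith
  qed
  with X(3) show ?thesis by simp
qed

lemma dsum_cyclic_flat_eq_dsum_space_proj:
  assumes "Z \<in> cyclic_flats (dsum_space E1 E2) (dsum_rank \<rho>1 \<rho>2)"
  shows "Z = dsum_space (proj1 ` Z) (proj2 ` Z)"
proof -
  have Z: "vec.subspace Z" "Z \<subseteq> dsum_space E1 E2"
    and flat: "qflat (dsum_space E1 E2) (dsum_rank \<rho>1 \<rho>2) Z"
    and cyc: "qcyclic (dsum_rank \<rho>1 \<rho>2) Z"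
    using assms by (auto simp: cyclic_flats_def qflat_def qsub_def)
  let ?D = "dsum_space (proj1 ` Z) (proj2 ` Z)"
  have sD: "vec.subspace ?D"
    using Z(1) by (intro subspace_dsum_space vec.linear_subspace_image linear_proj1 linear_proj2)
  have "?D \<subseteq> Z"
  proof
    fix y assume y: "y \<in> ?D"
    show "y \<in> Z"
    proof (rule ccontr)
      assume "y \<notin> Z"
      let ?S = "vec.span (insert y Z)"
      have "y \<in> dsum_space E1 E2"
        using y Z(2) by auto
      with \<open>y \<notin> Z\<close> have "dsum_rank \<rho>1 \<rho>2 Z < dsum_rank \<rho>1 \<rho>2 ?S"
        using qflatD[OF flat] by blast
      have "?S \<subseteq> ?D"
        using y sD by (intro vec.span_minimal) auto
      moreover have "Z \<subseteq> ?S"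
        using vec.span_superset[of "insert y Z"] by blast
      ultimately have "proj1 ` ?S = proj1 ` Z" "proj2 ` ?S = proj2 ` Z"
        by force+
      then have "dsum_rank \<rho>1 \<rho>2 ?S \<le> dsum_rank \<rho>1 \<rho>2 Z"
        using dsum_rank_le_proj[of ?S \<rho>1 \<rho>2] dsum_rank_qcyclic[OF Z(1) cyc] by simp
      with \<open>dsum_rank \<rho>1 \<rho>2 Z < dsum_rank \<rho>1 \<rho>2 ?S\<close> show False by simp
    qed
  qed
  then show ?thesis by auto
qed

section \<open>Cyclic flats of the direct sum\<close>

lemma qflat_dsum_space:
  assumes qm1: "qmatroid E1 \<rho>1" and qm2: "qmatroid E2 \<rho>2"
    and A: "qflat E1 \<rho>1 A" and B: "qflat E2 \<rho>2 B"
  shows "qflat (dsum_space E1 E2) (dsum_rank \<rho>1 \<rho>2) (dsum_space A B)"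
proof -
  have qA: "qsub E1 A" and qB: "qsub E2 B"
    using A B by (simp_all add: qflat_def)
  then have sA: "vec.subspace A" and sB: "vec.subspace B"
    by (simp_all add: qsub_def)
  have rank: "dsum_rank \<rho>1 \<rho>2 (dsum_space A B) = \<rho>1 A + \<rho>2 B"
    using qm1 qm2 qA qB by (rule dsum_rank_dsum_space)
  show ?thesis
  proof (rule qflatI[OF qsub_dsum_space[OF qA qB]])
    fix x assume x: "x \<in> dsum_space E1 E2" "x \<notin> dsum_space A B"
    let ?S = "vec.span (insert x (dsum_space A B))"
    have "vec.dim ?S = vec.dim A + vec.dim B + 1"
      using x(2) subspace_dsum_space[OF sA sB]
      by (simp add: vec.dim_insert span_of_subspace dim_dsum_space[OF sA sB])
    moreover have proj: "proj1 ` ?S = vec.span (insert (proj1 x) A)"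
      "proj2 ` ?S = vec.span (insert (proj2 x) B)"
      using sA sB by (simp_all add: vec.linear_span_image[OF linear_proj1, symmetric]
          vec.linear_span_image[OF linear_proj2, symmetric] proj1_dsum_space proj2_dsum_space
          vec.subspace_0)
    have "vec.dim ?S + (\<rho>1 A + \<rho>2 B) \<le> dsum_rank \<rho>1 \<rho>2 ?S + (vec.dim A + vec.dim B)"
    proof (rule dsum_rank_lower_bound)
      fix X assume X: "vec.subspace X" "X \<subseteq> ?S"
      have "\<rho>1 A + vec.dim (proj1 ` X) \<le> \<rho>1 (proj1 ` X) + vec.dim A"
        using X x(1) proj(1) by (intro qflat_nullity_le[OF qm1 A, of "proj1 x"]
            vec.linear_subspace_image[OF linear_proj1]) auto
      moreover have "\<rho>2 B + vec.dim (proj2 ` X) \<le> \<rho>2 (proj2 ` X) + vec.dim B"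
        using X x(1) proj(2) by (intro qflat_nullity_le[OF qm2 B, of "proj2 x"]
            vec.linear_subspace_image[OF linear_proj2]) auto
      ultimately show "vec.dim X + (\<rho>1 A + \<rho>2 B)
          \<le> \<rho>1 (proj1 ` X) + \<rho>2 (proj2 ` X) + (vec.dim A + vec.dim B)"
        using dim_le_dim_proj1_add_dim_proj2[OF X(1)] by linarith
    qed simp
    ultimately show "dsum_rank \<rho>1 \<rho>2 (dsum_space A B) < dsum_rank \<rho>1 \<rho>2 ?S"
      using rank by linarith
  qed
qed

lemma qflat_dsum_spaceD:
  assumes qm1: "qmatroid E1 \<rho>1" and qm2: "qmatroid E2 \<rho>2" and A: "qsub E1 A" and B: "qsub E2 B"
    and flat: "qflat (dsum_space E1 E2) (dsum_rank \<rho>1 \<rho>2) (dsum_space A B)"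
  shows "qflat E1 \<rho>1 A \<and> qflat E2 \<rho>2 B"
proof
  have sE1: "vec.subspace E1" and sE2: "vec.subspace E2"
    using qm1 qm2 by (simp_all add: qmatroid_def)
  have sA: "vec.subspace A" "A \<subseteq> E1" and sB: "vec.subspace B" "B \<subseteq> E2"
    using A B by (simp_all add: qsub_def)
  have rank: "dsum_rank \<rho>1 \<rho>2 (dsum_space A B) = \<rho>1 A + \<rho>2 B"
    using qm1 qm2 A B by (rule dsum_rank_dsum_space)
  show "qflat E1 \<rho>1 A"
  proof (rule qflatI[OF A])
    fix y assume y: "y \<in> E1" "y \<notin> A"
    then have "emb1 y \<in> dsum_space E1 E2" "emb1 y \<notin> dsum_space A B"
      using sE2 by (simp_all add: vec.subspace_0)
    then have "\<rho>1 A + \<rho>2 B < dsum_rank \<rho>1 \<rho>2 (vec.span (insert (emb1 y) (dsum_space A B)))"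
      using qflatD[OF flat] rank by simp
    also have "\<dots> = dsum_rank \<rho>1 \<rho>2 (dsum_space (vec.span (insert y A)) B)"
      by (simp only: span_insert_emb1_dsum_space[OF sA(1) sB(1)])
    also have "\<dots> = \<rho>1 (vec.span (insert y A)) + \<rho>2 B"
      using y sE1 sA(2) by (intro dsum_rank_dsum_space[OF qm1 qm2 _ B] qsub_span_insert) auto
    finally show "\<rho>1 A < \<rho>1 (vec.span (insert y A))" by simp
  qed
  show "qflat E2 \<rho>2 B"
  proof (rule qflatI[OF B])
    fix y assume y: "y \<in> E2" "y \<notin> B"
    then have "emb2 y \<in> dsum_space E1 E2" "emb2 y \<notin> dsum_space A B"
      using sE1 by (simp_all add: vec.subspace_0)
    then have "\<rho>1 A + \<rho>2 B < dsum_rank \<rho>1 \<rho>2 (vec.span (insert (emb2 y) (dsum_space A B)))"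
      using qflatD[OF flat] rank by simp
    also have "\<dots> = dsum_rank \<rho>1 \<rho>2 (dsum_space A (vec.span (insert y B)))"
      by (simp only: span_insert_emb2_dsum_space[OF sA(1) sB(1)])
    also have "\<dots> = \<rho>1 A + \<rho>2 (vec.span (insert y B))"
      using y sE2 sB(2) by (intro dsum_rank_dsum_space[OF qm1 qm2 A] qsub_span_insert) auto
    finally show "\<rho>2 B < \<rho>2 (vec.span (insert y B))" by simp
  qed
qed

lemma dsum_rank_hyperplane_ge:
  assumes qm1: "qmatroid E1 \<rho>1" and qm2: "qmatroid E2 \<rho>2"
    and A: "qsub E1 A" "qcyclic \<rho>1 A" and B: "qsub E2 B" "qcyclic \<rho>2 B"
    and W: "vec.subspace W" "W \<subseteq> dsum_space A B" "vec.dim (dsum_space A B) = vec.dim W + 1"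
  shows "\<rho>1 A + \<rho>2 B \<le> dsum_rank \<rho>1 \<rho>2 W"
proof -
  have sA: "vec.subspace A" and sB: "vec.subspace B"
    using A B by (simp_all add: qsub_def)
  have "vec.dim W + (\<rho>1 A + \<rho>2 B + 1) \<le> dsum_rank \<rho>1 \<rho>2 W + (vec.dim A + vec.dim B)"
  proof (rule dsum_rank_lower_bound[OF W(1)])
    fix X assume X: "vec.subspace X" "X \<subseteq> W"
    have XA: "proj1 ` X \<subseteq> A" and XB: "proj2 ` X \<subseteq> B"
      using X(2) W(2) by auto
    have sX: "vec.subspace (proj1 ` X)" "vec.subspace (proj2 ` X)"
      using X(1) linear_proj1 linear_proj2 by (auto intro: vec.linear_subspace_image)
    have n1: "\<rho>1 A + vec.dim (proj1 ` X) \<le> \<rho>1 (proj1 ` X) + vec.dim A"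
      using qmatroid_nullity_mono[OF qm1 A(1) sX(1) XA] .
    have n2: "\<rho>2 B + vec.dim (proj2 ` X) \<le> \<rho>2 (proj2 ` X) + vec.dim B"
      using qmatroid_nullity_mono[OF qm2 B(1) sX(2) XB] .
    have dX: "vec.dim X \<le> vec.dim (proj1 ` X) + vec.dim (proj2 ` X)"
      using X(1) by (rule dim_le_dim_proj1_add_dim_proj2)
    show "vec.dim X + (\<rho>1 A + \<rho>2 B + 1)
        \<le> \<rho>1 (proj1 ` X) + \<rho>2 (proj2 ` X) + (vec.dim A + vec.dim B)"
    proof (cases "proj1 ` X = A \<and> proj2 ` X = B")
      case True
      have "vec.dim X \<le> vec.dim W"
        using X(2) by (rule vec.dim_subset)
      with True W(3) show ?thesis
        using dim_dsum_space[OF sA sB] by simp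
    next
      case False
      then have "\<rho>1 A + vec.dim (proj1 ` X) < \<rho>1 (proj1 ` X) + vec.dim A
          \<or> \<rho>2 B + vec.dim (proj2 ` X) < \<rho>2 (proj2 ` X) + vec.dim B"
        using qcyclic_nullity_less[OF qm1 A sX(1) XA] qcyclic_nullity_less[OF qm2 B sX(2) XB]
        by blast
      with n1 n2 dX show ?thesis by linarith
    qed
  qed
  with W(3) dim_dsum_space[OF sA sB] show ?thesis by linarith
qed

lemma qcyclic_dsum_space:
  assumes qm1: "qmatroid E1 \<rho>1" and qm2: "qmatroid E2 \<rho>2"
    and A: "qsub E1 A" "qcyclic \<rho>1 A" and B: "qsub E2 B" "qcyclic \<rho>2 B"
  shows "qcyclic (dsum_rank \<rho>1 \<rho>2) (dsum_space A B)"
proof (rule qcyclicI)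
  fix x W assume x: "x \<in> dsum_space A B"
    and W: "vec.subspace W" "W \<subseteq> dsum_space A B" "vec.span (insert x W) = dsum_space A B"
  have sA: "vec.subspace A" "A \<subseteq> E1" and sB: "vec.subspace B" "B \<subseteq> E2"
    using A(1) B(1) by (simp_all add: qsub_def)
  have rank: "dsum_rank \<rho>1 \<rho>2 (dsum_space A B) = \<rho>1 A + \<rho>2 B"
    using qm1 qm2 A(1) B(1) by (rule dsum_rank_dsum_space)
  show "dsum_rank \<rho>1 \<rho>2 W = dsum_rank \<rho>1 \<rho>2 (dsum_space A B)"
  proof (cases "x \<in> W")
    case True
    then show ?thesis
      using W by (simp add: insert_absorb span_of_subspace)
  next
    case False
    have "vec.dim (dsum_space A B) = vec.dim W + 1"
      using W(1,3) False by (simp flip: W(3) add: vec.dim_insert span_of_subspace)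
    then have "\<rho>1 A + \<rho>2 B \<le> dsum_rank \<rho>1 \<rho>2 W"
      using W(1,2) by (intro dsum_rank_hyperplane_ge[OF qm1 qm2 A B])
    moreover have "dsum_rank \<rho>1 \<rho>2 W \<le> \<rho>1 A + \<rho>2 B"
    proof -
      have WA: "proj1 ` W \<subseteq> A" and WB: "proj2 ` W \<subseteq> B"
        using W(2) by auto
      moreover have "vec.subspace (proj1 ` W)" "vec.subspace (proj2 ` W)"
        using vec.linear_subspace_image[OF linear_proj1 W(1)]
          vec.linear_subspace_image[OF linear_proj2 W(1)] .
      ultimately have "qsub E1 (proj1 ` W)" "qsub E2 (proj2 ` W)"
        using sA(2) sB(2) by (auto simp: qsub_def)
      then have "\<rho>1 (proj1 ` W) \<le> \<rho>1 A" "\<rho>2 (proj2 ` W) \<le> \<rho>2 B"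
        using qmatroid_rank_mono[OF qm1 _ A(1) WA] qmatroid_rank_mono[OF qm2 _ B(1) WB] by blast+
      then show ?thesis
        using dsum_rank_le_proj[OF W(1), of \<rho>1 \<rho>2] by linarith
    qed
    ultimately show ?thesis
      using rank by linarith
  qed
qed

lemma qcyclic_dsum_spaceD:
  assumes qm1: "qmatroid E1 \<rho>1" and qm2: "qmatroid E2 \<rho>2" and A: "qsub E1 A" and B: "qsub E2 B"
    and cyc: "qcyclic (dsum_rank \<rho>1 \<rho>2) (dsum_space A B)"
  shows "qcyclic \<rho>1 A \<and> qcyclic \<rho>2 B"
proof
  have sA: "vec.subspace A" "A \<subseteq> E1" and sB: "vec.subspace B" "B \<subseteq> E2"
    using A B by (simp_all add: qsub_def)
  have rank: "dsum_rank \<rho>1 \<rho>2 (dsum_space A B) = \<rho>1 A + \<rho>2 B"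
    using qm1 qm2 A B by (rule dsum_rank_dsum_space)
  show "qcyclic \<rho>1 A"
  proof (rule qcyclicI)
    fix x W assume x: "x \<in> A" and W: "vec.subspace W" "W \<subseteq> A" "vec.span (insert x W) = A"
    have "dsum_rank \<rho>1 \<rho>2 (dsum_space W B) = dsum_rank \<rho>1 \<rho>2 (dsum_space A B)"
      using x W sB span_insert_emb1_dsum_space[OF W(1) sB(1)]
      by (intro qcyclicD[OF cyc]) (auto simp: subspace_dsum_space vec.subspace_0)
    moreover have "qsub E1 W" using W(1,2) sA(2) by (auto simp: qsub_def)
    ultimately show "\<rho>1 W = \<rho>1 A"
      using rank dsum_rank_dsum_space[OF qm1 qm2 _ B] by simp
  qed
  show "qcyclic \<rho>2 B"
  proof (rule qcyclicI)
    fix x W assume x: "x \<in> B" and W: "vec.subspace W" "W \<subseteq> B" "vec.span (insert x W) = B"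
    have "dsum_rank \<rho>1 \<rho>2 (dsum_space A W) = dsum_rank \<rho>1 \<rho>2 (dsum_space A B)"
      using x W sA span_insert_emb2_dsum_space[OF sA(1) W(1)]
      by (intro qcyclicD[OF cyc]) (auto simp: subspace_dsum_space vec.subspace_0)
    moreover have "qsub E2 W" using W(1,2) sB(2) by (auto simp: qsub_def)
    ultimately show "\<rho>2 W = \<rho>2 B"
      using rank dsum_rank_dsum_space[OF qm1 qm2 A] by simp
  qed
qed

lemma dsum_space_in_cyclic_flats_iff:
  assumes "qmatroid E1 \<rho>1" "qmatroid E2 \<rho>2" "qsub E1 A" "qsub E2 B"
  shows "dsum_space A B \<in> cyclic_flats (dsum_space E1 E2) (dsum_rank \<rho>1 \<rho>2)
    \<longleftrightarrow> A \<in> cyclic_flats E1 \<rho>1 \<and> B \<in> cyclic_flats E2 \<rho>2"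
  using qflat_dsum_space[OF assms(1,2)] qflat_dsum_spaceD[OF assms]
    qcyclic_dsum_space[OF assms(1,2,3) _ assms(4)] qcyclic_dsum_spaceD[OF assms]
  unfolding cyclic_flats_def by blast

theorem theorem6p2:
  fixes E1 :: "('a::{field,finite} ^ 'n1) set" and E2 :: "('a ^ 'n2) set"
    and \<rho>1 :: "('a ^ 'n1) set \<Rightarrow> nat" and \<rho>2 :: "('a ^ 'n2) set \<Rightarrow> nat"
  assumes "qmatroid E1 \<rho>1" and "qmatroid E2 \<rho>2"
  shows "cyclic_flats (dsum_space E1 E2) (dsum_rank \<rho>1 \<rho>2)
           = {dsum_space Z1 Z2 | Z1 Z2. Z1 \<in> cyclic_flats E1 \<rho>1 \<and> Z2 \<in> cyclic_flats E2 \<rho>2}"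
proof (intro set_eqI iffI)
  fix Z assume Z: "Z \<in> cyclic_flats (dsum_space E1 E2) (dsum_rank \<rho>1 \<rho>2)"
  then have "vec.subspace Z" "Z \<subseteq> dsum_space E1 E2"
    by (simp_all add: cyclic_flats_def qflat_def qsub_def)
  then have "qsub E1 (proj1 ` Z)" "qsub E2 (proj2 ` Z)"
    using vec.linear_subspace_image[OF linear_proj1] vec.linear_subspace_image[OF linear_proj2]
    by (auto simp: qsub_def)
  moreover have eq: "Z = dsum_space (proj1 ` Z) (proj2 ` Z)"
    using Z by (rule dsum_cyclic_flat_eq_dsum_space_proj)
  moreover have "dsum_space (proj1 ` Z) (proj2 ` Z) \<in> cyclic_flats (dsum_space E1 E2) (dsum_rank \<rho>1 \<rho>2)"
    using Z unfolding eq[symmetric] .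
  ultimately show "Z \<in> {dsum_space Z1 Z2 | Z1 Z2. Z1 \<in> cyclic_flats E1 \<rho>1 \<and> Z2 \<in> cyclic_flats E2 \<rho>2}"
    using dsum_space_in_cyclic_flats_iff[OF assms] by blast
next
  fix Z assume "Z \<in> {dsum_space Z1 Z2 | Z1 Z2. Z1 \<in> cyclic_flats E1 \<rho>1 \<and> Z2 \<in> cyclic_flats E2 \<rho>2}"
  then obtain Z1 Z2 where "Z = dsum_space Z1 Z2" "Z1 \<in> cyclic_flats E1 \<rho>1" "Z2 \<in> cyclic_flats E2 \<rho>2"
    by blast
  moreover from this have "qsub E1 Z1" "qsub E2 Z2"
    by (simp_all add: cyclic_flats_def qflat_def)
  ultimately show "Z \<in> cyclic_flats (dsum_space E1 E2) (dsum_rank \<rho>1 \<rho>2)"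
    using dsum_space_in_cyclic_flats_iff[OF assms] by blast
qed

end
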